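(* Let $A=A_{\bar 0}\oplus A_{\bar 1}$ be a finite-dimensional associative superalgebra over an algebraically closed field $\mathbb{K}$ of characteristic zero. Then $A$ admits an odd-symmetric structure if and only if there exists an isomorphism of $A_{\bar 0}$-bimodules $\phi:A_{\bar 1}\to A_{\bar 0}^*$ such that $\phi(x)(y.z)=\phi(z)(x.y)$ for all $x,y,z\in A_{\bar 1}$.
   Context: A superalgebra is a $\mathbb{Z}_2$-graded algebra $A=A_{\bar 0}\oplus A_{\bar 1}$ with $A_\alpha A_\beta\subseteq A_{\alpha+\beta}$; $|x|$ denotes the degree of a homogeneous element. A bilinear form $B$ on $A$ is odd if $B(A_{\bar 0},A_{\bar 0})=B(A_{\bar 1},A_{\bar 1})=\{0\}$; supersymmetric if $B(x,y)=(-1)^{|x||y|}B(y,x)$ for homogeneous $x,y$; associative if $B(x.y,z)=B(x,y.z)$; non-degenerate if $B(x,A)=\{0\}$ implies $x=0$. An odd-symmetric structure on $A$ is an odd, supersymmetric, associative, non-degenerate bilinear form on $A$. $A_{\bar 1}$ is an $A_{\bar 0}$-bimodule via left and right multiplication, and $A_{\bar 0}^*$ is an $A_{\bar 0}$-bimodule via $(x\cdot f)(y)=f(y.x)$ and $(f\cdot x)(y)=f(x.y)$ for $x,y\in A_{\bar 0}$, $f\in A_{\bar 0}^*$. *)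

theory Defs
  imports Main "HOL-Computational_Algebra.Polynomial"
begin

definition alg_closed_field :: "'k::field itself \<Rightarrow> bool" where
  "alg_closed_field _ \<longleftrightarrow> (\<forall>p :: 'k poly. degree p > 0 \<longrightarrow> (\<exists>x. poly p x = 0))"

definition fin_dim_vector_space :: "('k::field \<Rightarrow> 'a::ab_group_add \<Rightarrow> 'a) \<Rightarrow> bool" where
  "fin_dim_vector_space scale \<longleftrightarrow>
     vector_space scale \<and> (\<exists>S. finite S \<and> module.span scale S = UNIV)"

definition assoc_superalgebra ::
  "('k::field \<Rightarrow> 'a::ab_group_add \<Rightarrow> 'a) \<Rightarrow> ('a \<Rightarrow> 'a \<Rightarrow> 'a) \<Rightarrow> 'a set \<Rightarrow> 'a set \<Rightarrow> bool" where
  "assoc_superalgebra scale mul A0 A1 \<longleftrightarrow>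
     (\<forall>x y z. mul (x + y) z = mul x z + mul y z) \<and>
     (\<forall>x y z. mul x (y + z) = mul x y + mul x z) \<and>
     (\<forall>c x y. mul (scale c x) y = scale c (mul x y)) \<and>
     (\<forall>c x y. mul x (scale c y) = scale c (mul x y)) \<and>
     (\<forall>x y z. mul (mul x y) z = mul x (mul y z)) \<and>
     module.subspace scale A0 \<and> module.subspace scale A1 \<and>
     A0 \<inter> A1 = {0} \<and> (\<forall>x. \<exists>a\<in>A0. \<exists>b\<in>A1. x = a + b) \<and>
     (\<forall>x\<in>A0. \<forall>y\<in>A0. mul x y \<in> A0) \<and>
     (\<forall>x\<in>A0. \<forall>y\<in>A1. mul x y \<in> A1) \<and>
     (\<forall>x\<in>A1. \<forall>y\<in>A0. mul x y \<in> A1) \<and>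
     (\<forall>x\<in>A1. \<forall>y\<in>A1. mul x y \<in> A0)"

definition bilinear_form :: "('k::field \<Rightarrow> 'a::ab_group_add \<Rightarrow> 'a) \<Rightarrow> ('a \<Rightarrow> 'a \<Rightarrow> 'k) \<Rightarrow> bool" where
  "bilinear_form scale B \<longleftrightarrow>
     (\<forall>x y z. B (x + y) z = B x z + B y z) \<and>
     (\<forall>x y z. B x (y + z) = B x y + B x z) \<and>
     (\<forall>c x y. B (scale c x) y = c * B x y) \<and>
     (\<forall>c x y. B x (scale c y) = c * B x y)"

definition odd_symmetric_structure ::
  "('k::field \<Rightarrow> 'a::ab_group_add \<Rightarrow> 'a) \<Rightarrow> ('a \<Rightarrow> 'a \<Rightarrow> 'a) \<Rightarrow> 'a set \<Rightarrow> 'a set \<Rightarrow> ('a \<Rightarrow> 'a \<Rightarrow> 'k) \<Rightarrow> bool" where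
  "odd_symmetric_structure scale mul A0 A1 B \<longleftrightarrow>
     bilinear_form scale B \<and>
     \<comment> \<open>odd\<close>
     (\<forall>x\<in>A0. \<forall>y\<in>A0. B x y = 0) \<and> (\<forall>x\<in>A1. \<forall>y\<in>A1. B x y = 0) \<and>
     \<comment> \<open>supersymmetric\<close>
     (\<forall>x\<in>A0. \<forall>y\<in>A0. B x y = B y x) \<and>
     (\<forall>x\<in>A0. \<forall>y\<in>A1. B x y = B y x) \<and>
     (\<forall>x\<in>A1. \<forall>y\<in>A0. B x y = B y x) \<and>
     (\<forall>x\<in>A1. \<forall>y\<in>A1. B x y = - B y x) \<and>
     \<comment> \<open>associative\<close>
     (\<forall>x y z. B (mul x y) z = B x (mul y z)) \<and>
     \<comment> \<open>non-degenerate\<close>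
     (\<forall>x. (\<forall>y. B x y = 0) \<longrightarrow> x = 0)"

text \<open>Linear functionals on A0 (elements of the dual A0^*), represented by functions whose
  values matter only on A0.\<close>
definition lin_functional_on :: "('k::field \<Rightarrow> 'a::ab_group_add \<Rightarrow> 'a) \<Rightarrow> 'a set \<Rightarrow> ('a \<Rightarrow> 'k) \<Rightarrow> bool" where
  "lin_functional_on scale V f \<longleftrightarrow>
     (\<forall>y\<in>V. \<forall>y'\<in>V. f (y + y') = f y + f y') \<and> (\<forall>c. \<forall>y\<in>V. f (scale c y) = c * f y)"

text \<open>phi : A1 -> A0^* is an isomorphism of A0-bimodules, where A0^* carries the bimodule
  structure (x.f)(y) = f(y.x), (f.x)(y) = f(x.y).\<close>
definition bimodule_iso_to_dual ::
  "('k::field \<Rightarrow> 'a::ab_group_add \<Rightarrow> 'a) \<Rightarrow> ('a \<Rightarrow> 'a \<Rightarrow> 'a) \<Rightarrow> 'a set \<Rightarrow> 'a set \<Rightarrow> ('a \<Rightarrow> 'a \<Rightarrow> 'k) \<Rightarrow> bool" where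
  "bimodule_iso_to_dual scale mul A0 A1 \<phi> \<longleftrightarrow>
     \<comment> \<open>maps A1 into A0^*\<close>
     (\<forall>x\<in>A1. lin_functional_on scale A0 (\<phi> x)) \<and>
     \<comment> \<open>linear\<close>
     (\<forall>x\<in>A1. \<forall>x'\<in>A1. \<forall>y\<in>A0. \<phi> (x + x') y = \<phi> x y + \<phi> x' y) \<and>
     (\<forall>c. \<forall>x\<in>A1. \<forall>y\<in>A0. \<phi> (scale c x) y = c * \<phi> x y) \<and>
     \<comment> \<open>injective\<close>
     (\<forall>x\<in>A1. \<forall>x'\<in>A1. (\<forall>y\<in>A0. \<phi> x y = \<phi> x' y) \<longrightarrow> x = x') \<and>
     \<comment> \<open>surjective onto A0^*\<close>
     (\<forall>f. lin_functional_on scale A0 f \<longrightarrow> (\<exists>x\<in>A1. \<forall>y\<in>A0. \<phi> x y = f y)) \<and>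
     \<comment> \<open>bimodule homomorphism\<close>
     (\<forall>a\<in>A0. \<forall>x\<in>A1. \<forall>y\<in>A0. \<phi> (mul a x) y = \<phi> x (mul y a)) \<and>
     (\<forall>a\<in>A0. \<forall>x\<in>A1. \<forall>y\<in>A0. \<phi> (mul x a) y = \<phi> x (mul a y))"

end

theory Submission
  imports Defs
begin

text \<open>
  An odd form \<open>B\<close> only pairs \<open>A\<^sub>1\<close> with \<open>A\<^sub>0\<close>, so
  \<open>x \<mapsto> B x\<close> restricted to \<open>A\<^sub>1\<close> lands in \<open>A\<^sub>0\<^sup>*\<close>; non-degeneracy makes it injective,
  and in finite dimension every functional \<open>f\<close> on \<open>A\<^sub>0\<close> is represented: \<open>f \<circ> even_part = B z\<close>
  for some \<open>z\<close>, and then \<open>f = B (odd_part z)\<close>. Associativity and supersymmetry of \<open>B\<close> give the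
  bimodule property and the cyclic identity. Conversely \<open>\<phi>\<close> is symmetrised to
  \<open>B u v = \<phi> u\<^sub>1 v\<^sub>0 + \<phi> v\<^sub>1 u\<^sub>0\<close>: its associativity splits into homogeneous components, each
  handled by the bimodule property or, on \<open>A\<^sub>1 \<times> A\<^sub>1 \<times> A\<^sub>1\<close>, by the cyclic identity.
\<close>

lemma lin_functional_on_UNIV:
  "lin_functional_on scale UNIV f \<longleftrightarrow>
     (\<forall>x y. f (x + y) = f x + f y) \<and> (\<forall>c x. f (scale c x) = c * f x)"
  by (simp add: lin_functional_on_def)

lemma (in vector_space) lin_functionals_eq_on_span:
  assumes "lin_functional_on scale UNIV f" and "lin_functional_on scale UNIV g"
    and "\<forall>t\<in>T. f t = g t" and "x \<in> span T"
  shows "f x = g x"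
  using assms(4)
proof (induction rule: span_induct)
  case base
  have "h 0 = 0" if "lin_functional_on scale UNIV h" for h
  proof -
    have "h (scale 0 0) = 0 * h 0"
      using that unfolding lin_functional_on_UNIV by blast
    then show ?thesis by simp
  qed
  then have "f 0 = g 0" using assms(1,2) by metis
  then show ?case
    using assms(1,2) unfolding subspace_def lin_functional_on_UNIV by auto
next
  case (step t)
  then show ?case using assms(3) by blast
qed

lemma (in vector_space) exists_lin_functional_nonzero:
  assumes "a \<noteq> 0"
  shows "\<exists>f. lin_functional_on scale UNIV f \<and> f a \<noteq> 0"
proof -
  have ia: "independent {a}"
    using assms independent_empty by (intro independent_insertI) (auto simp: span_empty)
  define T where "T = extend_basis {a}"
  have T: "independent T" "span T = UNIV" "a \<in> T"
    using extend_basis_superset[OF ia] independent_extend_basis[OF ia] span_extend_basis[OF ia]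
    unfolding T_def by auto
  show ?thesis
    using T by (intro exI[of _ "\<lambda>v. representation T v a"])
      (simp add: lin_functional_on_UNIV representation_add representation_scale representation_basis)
qed

lemma (in vector_space) nondegenerate_form_represents_lin_functional:
  assumes "finite S" and "span S = UNIV"
    and B: "bilinear_form scale B" and nondeg: "\<And>x. (\<forall>y. B x y = 0) \<Longrightarrow> x = 0"
    and g: "lin_functional_on scale UNIV g"
  shows "\<exists>z. \<forall>y. B z y = g y"
proof -
  obtain T where T: "T \<subseteq> S" "independent T" "S \<subseteq> span T"
    using maximal_independent_subset by blast
  have spanT: "span T = UNIV"
    using assms(2) span_mono[OF T(3)] by (metis span_span top.extremum_uniqueI)
  interpret fd: finite_dimensional_vector_space scale T
    using T(2) spanT finite_subset[OF T(1) assms(1)] by unfold_locales auto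
  have B_left: "lin_functional_on scale UNIV (B z)" for z
    using B by (simp add: bilinear_form_def lin_functional_on_UNIV)
  have coord_eq: "(\<forall>y. B z y = h y) \<longleftrightarrow> (\<Sum>t\<in>T. scale (B z t - h t) t) = 0"
    if h: "lin_functional_on scale UNIV h" for z h
  proof
    assume "\<forall>y. B z y = h y"
    then show "(\<Sum>t\<in>T. scale (B z t - h t) t) = 0" by simp
  next
    assume "(\<Sum>t\<in>T. scale (B z t - h t) t) = 0"
    then have "\<forall>t\<in>T. B z t - h t = 0"
      using fd.independent_explicit[THEN iffD1, OF T(2)] by auto
    then have "\<forall>t\<in>T. B z t = h t" by simp
    then show "\<forall>y. B z y = h y"
      using lin_functionals_eq_on_span[OF B_left h] spanT by blast
  qed
  \<comment> \<open>The coordinate map of \<open>B z\<close> in the basis \<open>T\<close> is injective by non-degeneracy,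
    hence surjective.\<close>
  define L where "L z = (\<Sum>t\<in>T. scale (B z t) t)" for z
  have lin: "Vector_Spaces.linear scale scale L"
    unfolding L_def using B
    by unfold_locales (simp_all add: bilinear_form_def scale_left_distrib sum.distrib scale_sum_right)
  have "inj L"
  proof -
    interpret L: Vector_Spaces.linear scale scale L by fact
    have "z = 0" if "L z = 0" for z
    proof (rule nondeg)
      show "\<forall>y. B z y = 0"
        using that coord_eq[of "\<lambda>_. 0" z] by (simp add: L_def lin_functional_on_UNIV)
    qed
    then show ?thesis
      unfolding L.inj_iff_eq_0 by blast
  qed
  then obtain z where "L z = (\<Sum>t\<in>T. scale (g t) t)"
    using fd.linear_inj_imp_surj[OF lin] by (metis surjD)
  then have "(\<Sum>t\<in>T. scale (B z t - g t) t) = 0"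
    unfolding L_def by (simp add: scale_left_diff_distrib sum_subtractf)
  then show ?thesis
    using coord_eq[OF g] by blast
qed

locale graded_vector_space = vector_space scale
  for scale :: "'k::field \<Rightarrow> 'a::ab_group_add \<Rightarrow> 'a" +
  fixes A0 A1 :: "'a set"
  assumes subspace_A0: "subspace A0" and subspace_A1: "subspace A1"
    and A0_inter_A1: "A0 \<inter> A1 = {0}"
    and A0_plus_A1: "\<exists>a\<in>A0. \<exists>b\<in>A1. x = a + b"
begin

definition even_part :: "'a \<Rightarrow> 'a" where
  "even_part x = (SOME a. a \<in> A0 \<and> x - a \<in> A1)"

definition odd_part :: "'a \<Rightarrow> 'a" where
  "odd_part x = x - even_part x"

lemma even_part_mem: "even_part x \<in> A0" and odd_part_mem: "odd_part x \<in> A1"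
proof -
  obtain a b where "a \<in> A0" "b \<in> A1" "x = a + b"
    using A0_plus_A1 by blast
  then have "\<exists>a. a \<in> A0 \<and> x - a \<in> A1" by auto
  then have "even_part x \<in> A0 \<and> x - even_part x \<in> A1"
    unfolding even_part_def by (rule someI_ex)
  then show "even_part x \<in> A0" "odd_part x \<in> A1"
    unfolding odd_part_def by auto
qed

lemma even_plus_odd_part: "even_part x + odd_part x = x"
  by (simp add: odd_part_def)

lemma parts_of_even_plus_odd:
  assumes "a \<in> A0" and "b \<in> A1"
  shows "even_part (a + b) = a" and "odd_part (a + b) = b"
proof -
  have eq: "a - even_part (a + b) = odd_part (a + b) - b"
    using even_plus_odd_part[of "a + b"] by (simp add: algebra_simps)
  have "a - even_part (a + b) \<in> A0"
    using subspace_diff[OF subspace_A0 assms(1) even_part_mem] .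
  moreover have "odd_part (a + b) - b \<in> A1"
    using subspace_diff[OF subspace_A1 odd_part_mem assms(2)] .
  ultimately have "odd_part (a + b) - b \<in> A0 \<inter> A1"
    using eq by auto
  then have "odd_part (a + b) - b = 0"
    using A0_inter_A1 by blast
  then show "even_part (a + b) = a" "odd_part (a + b) = b"
    using eq by auto
qed

lemma
  assumes "a \<in> A0"
  shows even_part_even: "even_part a = a" and odd_part_even: "odd_part a = 0"
  using parts_of_even_plus_odd[OF assms subspace_0[OF subspace_A1]] by auto

lemma
  assumes "b \<in> A1"
  shows even_part_odd: "even_part b = 0" and odd_part_odd: "odd_part b = b"
  using parts_of_even_plus_odd[OF subspace_0[OF subspace_A0] assms] by auto

lemma even_part_add: "even_part (x + y) = even_part x + even_part y"
  and odd_part_add: "odd_part (x + y) = odd_part x + odd_part y"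
proof -
  have "x + y = (even_part x + even_part y) + (odd_part x + odd_part y)"
    using even_plus_odd_part[of x] even_plus_odd_part[of y] by (simp add: algebra_simps)
  then show "even_part (x + y) = even_part x + even_part y"
    and "odd_part (x + y) = odd_part x + odd_part y"
    using parts_of_even_plus_odd[OF subspace_add[OF subspace_A0 even_part_mem even_part_mem]
        subspace_add[OF subspace_A1 odd_part_mem odd_part_mem]] by metis+
qed

lemma even_part_scale: "even_part (scale c x) = scale c (even_part x)"
  and odd_part_scale: "odd_part (scale c x) = scale c (odd_part x)"
proof -
  have "scale c x = scale c (even_part x) + scale c (odd_part x)"
    using even_plus_odd_part[of x] by (metis scale_right_distrib)
  then show "even_part (scale c x) = scale c (even_part x)"
    and "odd_part (scale c x) = scale c (odd_part x)"
    using parts_of_even_plus_odd[OF subspace_scale[OF subspace_A0 even_part_mem]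
        subspace_scale[OF subspace_A1 odd_part_mem]] by metis+
qed

lemma lin_functional_even_part:
  assumes "lin_functional_on scale A0 f"
  shows "lin_functional_on scale UNIV (\<lambda>x. f (even_part x))"
  using assms even_part_mem by (simp add: lin_functional_on_def even_part_add even_part_scale)

lemma odd_form_inj_on_A1:
  assumes B: "bilinear_form scale B"
    and odd: "\<And>x y. x \<in> A1 \<Longrightarrow> y \<in> A1 \<Longrightarrow> B x y = 0"
    and nondeg: "\<And>x. (\<forall>y. B x y = 0) \<Longrightarrow> x = 0"
    and "x \<in> A1" "x' \<in> A1" and eq: "\<forall>y\<in>A0. B x y = B x' y"
  shows "x = x'"
proof -
  have "B (x - x') y = 0" for y
  proof -
    have "x - x' \<in> A1" using subspace_diff[OF subspace_A1 \<open>x \<in> A1\<close> \<open>x' \<in> A1\<close>] .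
    then have "B (x - x') y = B (x - x') (even_part y) + B (x - x') (odd_part y)"
      using B even_plus_odd_part[of y] unfolding bilinear_form_def by metis
    also have "\<dots> = B x (even_part y) - B x' (even_part y)"
      using odd[OF \<open>x - x' \<in> A1\<close> odd_part_mem] B
      unfolding bilinear_form_def by (metis add_diff_cancel_right' add.right_neutral diff_add_cancel)
    finally show ?thesis using eq even_part_mem by simp
  qed
  then show ?thesis using nondeg by fastforce
qed

lemma odd_form_onto_dual_of_A0:
  assumes "finite S" and "span S = UNIV" and B: "bilinear_form scale B"
    and odd: "\<And>x y. x \<in> A0 \<Longrightarrow> y \<in> A0 \<Longrightarrow> B x y = 0"
    and nondeg: "\<And>x. (\<forall>y. B x y = 0) \<Longrightarrow> x = 0"
    and f: "lin_functional_on scale A0 f"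
  shows "\<exists>x\<in>A1. \<forall>y\<in>A0. B x y = f y"
proof -
  obtain z where z: "\<forall>y. B z y = f (even_part y)"
    using nondegenerate_form_represents_lin_functional[OF assms(1,2) B nondeg
        lin_functional_even_part[OF f]] by blast
  have "B (odd_part z) y = f y" if "y \<in> A0" for y
  proof -
    have "B z y = B (even_part z) y + B (odd_part z) y"
      using B even_plus_odd_part[of z] unfolding bilinear_form_def by metis
    then show ?thesis
      using z odd[OF even_part_mem that] even_part_even[OF that] by simp
  qed
  then show ?thesis using odd_part_mem by blast
qed

definition pairing_form :: "('a \<Rightarrow> 'a \<Rightarrow> 'k) \<Rightarrow> 'a \<Rightarrow> 'a \<Rightarrow> 'k" where
  "pairing_form \<phi> u v = \<phi> (odd_part u) (even_part v) + \<phi> (odd_part v) (even_part u)"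

end

locale superalgebra = graded_vector_space scale A0 A1
  for scale :: "'k::field \<Rightarrow> 'a::ab_group_add \<Rightarrow> 'a" and A0 A1 +
  fixes mul :: "'a \<Rightarrow> 'a \<Rightarrow> 'a"
  assumes mul_add_left: "mul (x + y) z = mul x z + mul y z"
    and mul_add_right: "mul x (y + z) = mul x y + mul x z"
    and mul_A0_A0: "x \<in> A0 \<Longrightarrow> y \<in> A0 \<Longrightarrow> mul x y \<in> A0"
    and mul_A0_A1: "x \<in> A0 \<Longrightarrow> y \<in> A1 \<Longrightarrow> mul x y \<in> A1"
    and mul_A1_A0: "x \<in> A1 \<Longrightarrow> y \<in> A0 \<Longrightarrow> mul x y \<in> A1"
    and mul_A1_A1: "x \<in> A1 \<Longrightarrow> y \<in> A1 \<Longrightarrow> mul x y \<in> A0"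
begin

lemma even_part_mul:
    "even_part (mul x y) = mul (even_part x) (even_part y) + mul (odd_part x) (odd_part y)"
  and odd_part_mul:
    "odd_part (mul x y) = mul (even_part x) (odd_part y) + mul (odd_part x) (even_part y)"
proof -
  have "mul x y = mul (even_part x + odd_part x) (even_part y + odd_part y)"
    by (simp only: even_plus_odd_part)
  also have "\<dots> = (mul (even_part x) (even_part y) + mul (odd_part x) (odd_part y))
                + (mul (even_part x) (odd_part y) + mul (odd_part x) (even_part y))"
    by (simp add: mul_add_left mul_add_right ac_simps)
  finally have "mul x y = (mul (even_part x) (even_part y) + mul (odd_part x) (odd_part y))
                + (mul (even_part x) (odd_part y) + mul (odd_part x) (even_part y))" .
  moreover have "mul (even_part x) (even_part y) + mul (odd_part x) (odd_part y) \<in> A0"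
    by (intro subspace_add[OF subspace_A0] mul_A0_A0 mul_A1_A1 even_part_mem odd_part_mem)
  moreover have "mul (even_part x) (odd_part y) + mul (odd_part x) (even_part y) \<in> A1"
    by (intro subspace_add[OF subspace_A1] mul_A0_A1 mul_A1_A0 even_part_mem odd_part_mem)
  ultimately show
    "even_part (mul x y) = mul (even_part x) (even_part y) + mul (odd_part x) (odd_part y)"
    "odd_part (mul x y) = mul (even_part x) (odd_part y) + mul (odd_part x) (even_part y)"
    using parts_of_even_plus_odd by metis+
qed

lemma odd_symmetric_structure_cyclic:
  assumes "odd_symmetric_structure scale mul A0 A1 B" and "x \<in> A1" "y \<in> A1" "z \<in> A1"
  shows "B x (mul y z) = B z (mul x y)"
proof -
  have "B x (mul y z) = B (mul x y) z"
    using assms(1) unfolding odd_symmetric_structure_def by metis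
  also have "\<dots> = B z (mul x y)"
    using assms mul_A1_A1 unfolding odd_symmetric_structure_def by metis
  finally show ?thesis .
qed

lemma odd_symmetric_structure_bimodule_iso:
  assumes "finite S" and "span S = UNIV" and B: "odd_symmetric_structure scale mul A0 A1 B"
  shows "bimodule_iso_to_dual scale mul A0 A1 B"
proof -
  have bil: "bilinear_form scale B" and assoc: "\<And>x y z. B (mul x y) z = B x (mul y z)"
    and odd_A0: "\<And>x y. x \<in> A0 \<Longrightarrow> y \<in> A0 \<Longrightarrow> B x y = 0"
    and odd_A1: "\<And>x y. x \<in> A1 \<Longrightarrow> y \<in> A1 \<Longrightarrow> B x y = 0"
    and nondeg: "\<And>x. (\<forall>y. B x y = 0) \<Longrightarrow> x = 0"
    and sym: "\<And>x y. x \<in> A1 \<Longrightarrow> y \<in> A0 \<Longrightarrow> B x y = B y x"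
    using B unfolding odd_symmetric_structure_def by auto
  show ?thesis
    unfolding bimodule_iso_to_dual_def
  proof (intro conjI)
    show "\<forall>x\<in>A1. lin_functional_on scale A0 (B x)"
      using bil by (simp add: lin_functional_on_def bilinear_form_def)
    show "\<forall>x\<in>A1. \<forall>x'\<in>A1. \<forall>y\<in>A0. B (x + x') y = B x y + B x' y"
      and "\<forall>c. \<forall>x\<in>A1. \<forall>y\<in>A0. B (scale c x) y = c * B x y"
      using bil by (simp_all add: bilinear_form_def)
    show "\<forall>x\<in>A1. \<forall>x'\<in>A1. (\<forall>y\<in>A0. B x y = B x' y) \<longrightarrow> x = x'"
      using odd_form_inj_on_A1[OF bil odd_A1 nondeg] by blast
    show "\<forall>f. lin_functional_on scale A0 f \<longrightarrow> (\<exists>x\<in>A1. \<forall>y\<in>A0. B x y = f y)"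
      using odd_form_onto_dual_of_A0[OF assms(1,2) bil odd_A0 nondeg] by blast
    show "\<forall>a\<in>A0. \<forall>x\<in>A1. \<forall>y\<in>A0. B (mul a x) y = B x (mul y a)"
      using assoc sym mul_A1_A0 by metis
    show "\<forall>a\<in>A0. \<forall>x\<in>A1. \<forall>y\<in>A0. B (mul x a) y = B x (mul a y)"
      using assoc by metis
  qed
qed

context
  fixes \<phi> :: "'a \<Rightarrow> 'a \<Rightarrow> 'k"
  assumes iso: "bimodule_iso_to_dual scale mul A0 A1 \<phi>"
begin

lemma
  shows iso_add_right:
      "\<And>x y y'. x \<in> A1 \<Longrightarrow> y \<in> A0 \<Longrightarrow> y' \<in> A0 \<Longrightarrow> \<phi> x (y + y') = \<phi> x y + \<phi> x y'"
    and iso_scale_right: "\<And>c x y. x \<in> A1 \<Longrightarrow> y \<in> A0 \<Longrightarrow> \<phi> x (scale c y) = c * \<phi> x y"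
    and iso_add_left:
      "\<And>x x' y. x \<in> A1 \<Longrightarrow> x' \<in> A1 \<Longrightarrow> y \<in> A0 \<Longrightarrow> \<phi> (x + x') y = \<phi> x y + \<phi> x' y"
    and iso_scale_left: "\<And>c x y. x \<in> A1 \<Longrightarrow> y \<in> A0 \<Longrightarrow> \<phi> (scale c x) y = c * \<phi> x y"
    and iso_inj:
      "\<And>x x'. x \<in> A1 \<Longrightarrow> x' \<in> A1 \<Longrightarrow> \<forall>y\<in>A0. \<phi> x y = \<phi> x' y \<Longrightarrow> x = x'"
    and iso_surj: "\<And>f. lin_functional_on scale A0 f \<Longrightarrow> \<exists>x\<in>A1. \<forall>y\<in>A0. \<phi> x y = f y"
    and iso_mul_left:
      "\<And>a x y. a \<in> A0 \<Longrightarrow> x \<in> A1 \<Longrightarrow> y \<in> A0 \<Longrightarrow> \<phi> (mul a x) y = \<phi> x (mul y a)"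
    and iso_mul_right:
      "\<And>a x y. a \<in> A0 \<Longrightarrow> x \<in> A1 \<Longrightarrow> y \<in> A0 \<Longrightarrow> \<phi> (mul x a) y = \<phi> x (mul a y)"
  using iso unfolding bimodule_iso_to_dual_def lin_functional_on_def by auto

lemma iso_zero_right: "x \<in> A1 \<Longrightarrow> \<phi> x 0 = 0"
  using iso_scale_right[of x 0 0] subspace_0[OF subspace_A0] by simp

lemma iso_zero_left: "y \<in> A0 \<Longrightarrow> \<phi> 0 y = 0"
  using iso_scale_left[of 0 y 0] subspace_0[OF subspace_A1] by simp

lemma pairing_form_bilinear: "bilinear_form scale (pairing_form \<phi>)"
  unfolding bilinear_form_def pairing_form_def
  by (simp add: even_part_add odd_part_add even_part_scale odd_part_scale even_part_mem odd_part_mem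
      iso_add_left iso_add_right iso_scale_left iso_scale_right algebra_simps)

lemma pairing_form_assoc:
  assumes cyclic: "\<forall>x\<in>A1. \<forall>y\<in>A1. \<forall>z\<in>A1. \<phi> x (mul y z) = \<phi> z (mul x y)"
  shows "pairing_form \<phi> (mul x y) z = pairing_form \<phi> x (mul y z)"
proof -
  let ?x0 = "even_part x" and ?x1 = "odd_part x" and ?y0 = "even_part y"
    and ?y1 = "odd_part y" and ?z0 = "even_part z" and ?z1 = "odd_part z"
  have mem: "?x0 \<in> A0" "?y0 \<in> A0" "?z0 \<in> A0" "?x1 \<in> A1" "?y1 \<in> A1" "?z1 \<in> A1"
    using even_part_mem odd_part_mem by auto
  have "pairing_form \<phi> (mul x y) z = \<phi> (mul ?x0 ?y1) ?z0 + \<phi> (mul ?x1 ?y0) ?z0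
      + \<phi> ?z1 (mul ?x0 ?y0) + \<phi> ?z1 (mul ?x1 ?y1)"
    unfolding pairing_form_def even_part_mul odd_part_mul using mem
    by (simp add: iso_add_left iso_add_right mul_A0_A0 mul_A0_A1 mul_A1_A0 mul_A1_A1)
  also have "\<dots> = \<phi> ?y1 (mul ?z0 ?x0) + \<phi> ?x1 (mul ?y0 ?z0)
      + \<phi> (mul ?y0 ?z1) ?x0 + \<phi> ?x1 (mul ?y1 ?z1)"
    using iso_mul_left[of ?x0 ?y1 ?z0] iso_mul_right[of ?z0 ?y1 ?x0] iso_mul_right[of ?y0 ?x1 ?z0]
      iso_mul_left[of ?y0 ?z1 ?x0] cyclic mem by (simp add: algebra_simps)
  also have "\<dots> = pairing_form \<phi> x (mul y z)"
    unfolding pairing_form_def even_part_mul odd_part_mul using mem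
    by (simp add: iso_add_left iso_add_right iso_mul_right mul_A0_A0 mul_A0_A1 mul_A1_A0 mul_A1_A1
        algebra_simps)
  finally show ?thesis .
qed

lemma pairing_form_nondegenerate:
  assumes zero: "\<forall>y. pairing_form \<phi> x y = 0"
  shows "x = 0"
proof -
  have "\<phi> (odd_part x) y = pairing_form \<phi> x y" if "y \<in> A0" for y
    using that by (simp add: pairing_form_def even_part_even odd_part_even iso_zero_left even_part_mem)
  then have odd: "odd_part x = 0"
    using zero iso_inj[OF odd_part_mem subspace_0[OF subspace_A1]] iso_zero_left by simp
  have "even_part x = 0"
  proof (rule ccontr)
    assume "even_part x \<noteq> 0"
    then obtain f where f: "lin_functional_on scale UNIV f" "f (even_part x) \<noteq> 0"
      using exists_lin_functional_nonzero by blast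
    then have "lin_functional_on scale A0 f"
      by (simp add: lin_functional_on_def)
    then obtain y where y: "y \<in> A1" "\<forall>a\<in>A0. \<phi> y a = f a"
      using iso_surj by blast
    have "pairing_form \<phi> x y = \<phi> y (even_part x)"
      using y(1) odd by (simp add: pairing_form_def even_part_odd odd_part_odd iso_zero_right
          iso_zero_left[OF subspace_0[OF subspace_A0]])
    then show False
      using zero y(2) f(2) even_part_mem by simp
  qed
  then show ?thesis
    using odd even_plus_odd_part[of x] by simp
qed

lemma pairing_form_odd_symmetric:
  assumes "\<forall>x\<in>A1. \<forall>y\<in>A1. \<forall>z\<in>A1. \<phi> x (mul y z) = \<phi> z (mul x y)"
  shows "odd_symmetric_structure scale mul A0 A1 (pairing_form \<phi>)"
  unfolding odd_symmetric_structure_def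
  using pairing_form_bilinear pairing_form_assoc[OF assms] pairing_form_nondegenerate
  by (auto simp: pairing_form_def even_part_even odd_part_even even_part_odd odd_part_odd
      iso_zero_left iso_zero_right add.commute)

end

end

lemma superalgebra_if_assoc_superalgebra:
  assumes "vector_space scale" and "assoc_superalgebra scale mul A0 A1"
  shows "superalgebra scale A0 A1 mul"
  using assms unfolding assoc_superalgebra_def superalgebra_def superalgebra_axioms_def
    graded_vector_space_def graded_vector_space_axioms_def
  by auto

theorem mainTheorem2:
  fixes scale :: "'k::field_char_0 \<Rightarrow> 'a::ab_group_add \<Rightarrow> 'a"
    and mul :: "'a \<Rightarrow> 'a \<Rightarrow> 'a"
    and A0 A1 :: "'a set"
  assumes "alg_closed_field TYPE('k)"
    and "fin_dim_vector_space scale"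
    and "assoc_superalgebra scale mul A0 A1"
  shows "(\<exists>B. odd_symmetric_structure scale mul A0 A1 B) \<longleftrightarrow>
         (\<exists>\<phi>. bimodule_iso_to_dual scale mul A0 A1 \<phi> \<and>
              (\<forall>x\<in>A1. \<forall>y\<in>A1. \<forall>z\<in>A1. \<phi> x (mul y z) = \<phi> z (mul x y)))"
proof -
  obtain S where vs: "vector_space scale" and S: "finite S" "module.span scale S = UNIV"
    using assms(2) unfolding fin_dim_vector_space_def by blast
  interpret superalgebra scale A0 A1 mul
    using superalgebra_if_assoc_superalgebra[OF vs assms(3)] .
  show ?thesis
  proof
    assume "\<exists>B. odd_symmetric_structure scale mul A0 A1 B"
    then show "\<exists>\<phi>. bimodule_iso_to_dual scale mul A0 A1 \<phi> \<and>
        (\<forall>x\<in>A1. \<forall>y\<in>A1. \<forall>z\<in>A1. \<phi> x (mul y z) = \<phi> z (mul x y))"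
      using odd_symmetric_structure_bimodule_iso[OF S] odd_symmetric_structure_cyclic by blast
  next
    assume "\<exists>\<phi>. bimodule_iso_to_dual scale mul A0 A1 \<phi> \<and>
        (\<forall>x\<in>A1. \<forall>y\<in>A1. \<forall>z\<in>A1. \<phi> x (mul y z) = \<phi> z (mul x y))"
    then show "\<exists>B. odd_symmetric_structure scale mul A0 A1 B"
      using pairing_form_odd_symmetric by blast
  qed
qed

end
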